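(* Let $\Sigma\in\mathsf{c}\text{-}\mathsf{Fan}_{\rm sc}^{+-}(2)$ with rays $v_1=(1,0),v_2,\ldots,v_{n-2}=(0,-1),v_{n-1}=(-1,0),v_n=v_0=(0,1)$ in clockwise order, facets $\sigma_i=\operatorname{cone}\{v_i,v_{i+1}\}$ ($1\le i\le n$), and quiddity sequence $\mathrm{s}(\Sigma)=(a_1,\ldots,a_{n-2};0,0)$. (a) We have $\mathrm{s}(\rho(\Sigma))=(a_2,\ldots,a_{n-2},a_1;0,0)$. In particular, $\rho^{n-2}(\Sigma)=\Sigma$ holds, and therefore $\rho$ is an invertible operation. (b) For each $1\le i\le n-3$, we have $D_{\sigma_i}(\Sigma)=\rho^{n-3-i}\circ D_{\sigma_{n-3}}\circ\rho^{i+1}(\Sigma)$.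
   Context: $\mathsf{c}\text{-}\mathsf{Fan}_{\rm sc}^{+-}(2)$ is the set of complete nonsingular sign-coherent fans in $\mathbb{R}^2$ with positive cone $\sigma_+=\operatorname{cone}\{(1,0),(0,1)\}$ and negative cone $\operatorname{cone}\{(-1,0),(0,-1)\}$ which contain $\sigma_{-+}=\operatorname{cone}\{(-1,0),(0,1)\}$. The quiddity sequence is defined by $a_iv_i=v_{i-1}+v_{i+1}$ (here $a_{n-1}=a_n=0$). For a cone $\sigma=\operatorname{cone}\{u,v\}$ of a nonsingular fan, the subdivision $D_\sigma$ adds the ray $u+v$ and replaces $\sigma$ by $\operatorname{cone}\{u,u+v\}$ and $\operatorname{cone}\{v,u+v\}$. The rotation $\rho(\Sigma)$: take $\sigma=\operatorname{cone}\{(1,0),(\ell,-1)\}\in\Sigma$ (i.e. $v_2=(\ell,-1)$); let $\Sigma'$ have rays $(\Sigma_1\setminus\{(0,1)\})\cup\{(-\ell,1)\}$ and 2-dimensional cones $(\Sigma_2\setminus\{\sigma_+,\sigma_{-+}\})\cup\{-\sigma,\operatorname{cone}\{(-\ell,1),(1,0)\}\}$; then $\rho(\Sigma)$ is the image of $\Sigma'$ under the linear map of $\mathbb{R}^2$ sending $(1,0)\mapsto(0,1)$ and $(\ell,-1)\mapsto(1,0)$. *)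

theory Defs
  imports Main
begin

text \<open>Rays of a nonsingular fan are primitive
integer vectors, and a 2-dimensional nonsingular cone cone{u,v} is determined by
the set {u,v} of its primitive generators. A fan in R^2 is encoded as the pair
(set of rays, set of 2-dimensional cones), each 2-dimensional cone being
encoded by its generator set.\<close>

type_synonym vec = "int \<times> int"
type_synonym fan = "vec set \<times> vec set set"

definition vadd :: "vec \<Rightarrow> vec \<Rightarrow> vec" where
  "vadd u v = (fst u + fst v, snd u + snd v)"

definition vneg :: "vec \<Rightarrow> vec" where
  "vneg u = (- fst u, - snd u)"

definition smul :: "int \<Rightarrow> vec \<Rightarrow> vec" where
  "smul a u = (a * fst u, a * snd u)"

definition det2 :: "vec \<Rightarrow> vec \<Rightarrow> int" where
  "det2 u v = fst u * snd v - snd u * fst v"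

definition fan_of :: "vec list \<Rightarrow> fan" where
  "fan_of vs = (set vs, {{vs ! i, vs ! ((i + 1) mod length vs)} | i. i < length vs})"

text \<open>Ray sequences v_1 = (1,0), v_2, ..., v_(n-2) = (0,-1), v_(n-1) = (-1,0),
v_n = (0,1) (stored 0-indexed) in clockwise order, each consecutive pair
(cyclically) forming a unimodular clockwise basis (nonsingularity), and the
intermediate rays lying in the open fourth quadrant (sign-coherence of the
cones subdividing the fourth quadrant).\<close>
definition is_ray_seq :: "vec list \<Rightarrow> bool" where
  "is_ray_seq vs \<longleftrightarrow> (let n = length vs in
     n \<ge> 4 \<and> vs ! 0 = (1, 0) \<and> vs ! (n - 3) = (0, -1) \<and>
     vs ! (n - 2) = (-1, 0) \<and> vs ! (n - 1) = (0, 1) \<and>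
     (\<forall>i < n. det2 (vs ! i) (vs ! ((i + 1) mod n)) = -1) \<and>
     (\<forall>i. 0 < i \<and> i < n - 3 \<longrightarrow> fst (vs ! i) > 0 \<and> snd (vs ! i) < 0))"

definition cFan :: "fan set" where
  "cFan = {fan_of vs | vs. is_ray_seq vs}"

definition rays_list :: "fan \<Rightarrow> vec list" where
  "rays_list S = (THE vs. is_ray_seq vs \<and> fan_of vs = S)"

definition nrays :: "fan \<Rightarrow> nat" where
  "nrays S = length (rays_list S)"

text \<open>v_i for i = 0..n+1 (1-indexed, cyclic: v_0 = v_n, v_(n+1) = v_1).\<close>
definition ray :: "fan \<Rightarrow> nat \<Rightarrow> vec" where
  "ray S i = rays_list S ! ((i + nrays S - 1) mod nrays S)"

definition quiddity :: "fan \<Rightarrow> int list" where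
  "quiddity S = map (\<lambda>i. THE a. smul a (ray S i) = vadd (ray S (i - 1)) (ray S (i + 1)))
                    [1..<nrays S + 1]"

definition facet :: "fan \<Rightarrow> nat \<Rightarrow> vec \<times> vec" where
  "facet S i = (ray S i, ray S (i + 1))"

definition subdiv :: "vec \<times> vec \<Rightarrow> fan \<Rightarrow> fan" where
  "subdiv \<sigma> S = (let u = fst \<sigma>; v = snd \<sigma>; w = vadd u v in
     (insert w (fst S), (snd S - {{u, v}}) \<union> {{u, w}, {v, w}}))"

definition rho :: "fan \<Rightarrow> fan" where
  "rho S = (let l = (THE l. {(1, 0), (l, -1)} \<in> snd S);
               M = (\<lambda>(x, y). (- y, x + l * y) :: vec);
               R' = (fst S - {(0, 1)}) \<union> {(- l, 1)};
               C' = (snd S - {{(1, 0), (0, 1)}, {(-1, 0), (0, 1)}})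
                    \<union> {vneg ` {(1, 0), (l, -1)}, {(- l, 1), (1, 0)}}
            in (M ` R', (\<lambda>c. M ` c) ` C'))"

end

theory Submission
  imports Defs Complex_Main
begin

text \<open>A fan of the class is determined by its clockwise list of rays
  v_1 = (1,0), ..., v_n = (0,1). Cyclically consecutive rays form bases of determinant -1,
  so v_(i+1) = a_i v_i - v_(i-1) with a_i = -det2 v_(i-1) v_(i+1), and the list is determined
  by its length and its quiddity sequence.

  On ray lists, rho replaces (0,1) by (-l,1), moves (1,0) to the end and applies a linear map
  of determinant 1. The linear map does not change quiddity coefficients, so the quiddity
  sequence is rotated by one; this gives (a), and rho^(n-2) is the identity. Subdividing
  cone{u,v} inserts u+v between u and v and turns the coefficients (..., a, b, ...) of u, v
  into (..., a+1, 1, b+1, ...). In (b) both sides are therefore ray lists of length n+1 with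
  the same quiddity sequence, which is an identity between rotations of integer lists.\<close>

section \<open>Quiddity coefficients\<close>

definition clockwise_basis :: "vec \<Rightarrow> vec \<Rightarrow> bool" where
  "clockwise_basis u v \<longleftrightarrow> det2 u v = -1"

lemma det2_vadd_left: "det2 (vadd u v) w = det2 u w + det2 v w"
  and det2_vadd_right: "det2 u (vadd v w) = det2 u v + det2 u w"
  and det2_swap: "det2 v u = - det2 u v"
  and det2_self: "det2 u u = 0"
  by (simp_all add: det2_def vadd_def algebra_simps)

lemma vadd_left_cancel: "vadd p u = vadd p u' \<Longrightarrow> u = u'"
  by (simp add: vadd_def prod_eq_iff)

definition quid_coeff :: "vec \<Rightarrow> vec \<Rightarrow> vec \<Rightarrow> int" where
  "quid_coeff p v u = (THE a. smul a v = vadd p u)"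

lemma quid_coeff_eqI:
  assumes "v \<noteq> (0, 0)" and "smul a v = vadd p u"
  shows "quid_coeff p v u = a"
  unfolding quid_coeff_def
proof (rule the_equality)
  fix b assume "smul b v = vadd p u"
  then have "smul b v = smul a v"
    using assms(2) by simp
  with assms(1) show "b = a"
    by (cases v) (auto simp: smul_def)
qed (fact assms(2))

lemma clockwise_basis_nonzero:
  "clockwise_basis u v \<Longrightarrow> u \<noteq> (0, 0) \<and> v \<noteq> (0, 0)"
  by (auto simp: clockwise_basis_def det2_def)

text \<open>Cramer's rule in the basis p, v.\<close>
lemma smul_det2_eq_vadd:
  assumes "clockwise_basis p v" "clockwise_basis v u"
  shows "smul (- det2 p u) v = vadd p u"
proof -
  obtain a b c d e f where vs: "p = (a, b)" "v = (c, d)" "u = (e, f)"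
    by (metis prod.exhaust)
  have dets: "a * d - b * c = -1" "c * f - d * e = -1"
    using assms by (simp_all add: vs clockwise_basis_def det2_def)
  have "(b * e - a * f) * c = a + e" "(b * e - a * f) * d = b + f"
    using dets by algebra+
  then show ?thesis
    by (simp add: vs det2_def smul_def vadd_def algebra_simps)
qed

lemma quid_coeff_det2:
  assumes "clockwise_basis p v" "clockwise_basis v u"
  shows "quid_coeff p v u = - det2 p u"
  using assms by (intro quid_coeff_eqI smul_det2_eq_vadd) (auto dest: clockwise_basis_nonzero)

lemma smul_quid_coeff:
  assumes "clockwise_basis p v" "clockwise_basis v u"
  shows "smul (quid_coeff p v u) v = vadd p u"
  using assms by (simp add: quid_coeff_det2 smul_det2_eq_vadd)

section \<open>Cycles of clockwise bases\<close>

fun inner_coeffs :: "vec list \<Rightarrow> int list" where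
  "inner_coeffs (p # v # u # xs) = quid_coeff p v u # inner_coeffs (v # u # xs)"
| "inner_coeffs _ = []"

lemma inner_coeffs_conv_nth:
  "inner_coeffs xs =
     map (\<lambda>i. quid_coeff (xs ! i) (xs ! (i + 1)) (xs ! (i + 2))) [0..<length xs - 2]"
proof (induction xs rule: inner_coeffs.induct)
  case (1 p v u xs)
  then show ?case
    by (simp add: upt_conv_Cons map_Suc_upt[symmetric] del: upt_Suc)
qed simp_all

lemma inner_coeffs_snoc:
  "xs \<noteq> [] \<Longrightarrow>
     inner_coeffs (xs @ [v, u]) = inner_coeffs (xs @ [v]) @ [quid_coeff (last xs) v u]"
  by (induction xs rule: inner_coeffs.induct) auto

definition cyclic_quiddity :: "vec list \<Rightarrow> int list" where
  "cyclic_quiddity xs = inner_coeffs (last xs # xs @ [hd xs])"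

definition clockwise_cycle :: "vec list \<Rightarrow> bool" where
  "clockwise_cycle xs \<longleftrightarrow>
     (\<forall>i < length xs. clockwise_basis (xs ! i) (xs ! ((i + 1) mod length xs)))"

lemma nth_snoc_hd_Suc:
  assumes "i < length xs"
  shows "(xs @ [hd xs]) ! Suc i = xs ! (Suc i mod length xs)"
proof (cases "Suc i = length xs")
  case True
  then show ?thesis
    by (cases xs) (simp_all add: nth_append)
qed (use assms in \<open>simp add: nth_append\<close>)

lemma clockwise_cycle_iff_successively:
  assumes "xs \<noteq> []"
  shows "clockwise_cycle xs \<longleftrightarrow> successively clockwise_basis (xs @ [hd xs])"
proof -
  have "(xs @ [hd xs]) ! i = xs ! i" if "i < length xs" for i
    using that by (simp add: nth_append)
  then show ?thesis
    by (auto simp: clockwise_cycle_def successively_conv_nth nth_snoc_hd_Suc)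
qed

lemma clockwise_cycle_rotate:
  assumes "clockwise_cycle xs"
  shows "clockwise_cycle (rotate k xs)"
  unfolding clockwise_cycle_def
proof (intro allI impI)
  fix i assume i: "i < length (rotate k xs)"
  then have "(k + i) mod length xs < length xs"
    by (cases xs) auto
  with assms have "clockwise_basis (xs ! ((k + i) mod length xs))
                     (xs ! (((k + i) mod length xs + 1) mod length xs))"
    by (simp add: clockwise_cycle_def)
  moreover have
    "((k + i) mod length xs + 1) mod length xs = (k + (i + 1) mod length xs) mod length xs"
    by (simp add: mod_simps)
  moreover have "(i + 1) mod length xs < length xs"
    using i by (cases xs) auto
  ultimately show "clockwise_basis (rotate k xs ! i)
                     (rotate k xs ! ((i + 1) mod length (rotate k xs)))"
    using i by (simp add: nth_rotate)
qed

lemma clockwise_cycle_length: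
  assumes "clockwise_cycle xs" "xs \<noteq> []"
  shows "3 \<le> length xs"
proof (rule ccontr)
  assume "\<not> 3 \<le> length xs"
  obtain x ys where xs: "xs = x # ys"
    using assms(2) by (cases xs) auto
  with \<open>\<not> 3 \<le> length xs\<close> consider "xs = [x]" | y where "xs = [x, y]"
    by (cases ys; cases "tl ys") auto
  then show False
  proof cases
    case 1
    with assms(1) show False
      by (auto simp: clockwise_cycle_def clockwise_basis_def det2_self)
  next
    case 2
    with assms(1) have "clockwise_basis x y" "clockwise_basis y x"
      unfolding clockwise_cycle_def by (auto dest: spec[of _ 0] spec[of _ 1])
    then show False
      by (simp add: clockwise_basis_def det2_swap[of y x])
  qed
qed

lemma cyclic_quiddity_rotate1: "cyclic_quiddity (rotate1 xs) = rotate1 (cyclic_quiddity xs)"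
proof (cases xs)
  case (Cons x ys)
  show ?thesis
  proof (cases ys)
    case (Cons y zs)
    have "cyclic_quiddity (rotate1 xs) = inner_coeffs ((x # ys) @ [x, hd ys])"
      by (simp add: cyclic_quiddity_def \<open>xs = x # ys\<close> \<open>ys = y # zs\<close>)
    also have "\<dots> = inner_coeffs (x # ys @ [x]) @ [quid_coeff (last ys) x (hd ys)]"
      using inner_coeffs_snoc[of "x # ys" x "hd ys"] by (simp add: \<open>ys = y # zs\<close>)
    finally show ?thesis
      by (simp add: cyclic_quiddity_def \<open>xs = x # ys\<close> \<open>ys = y # zs\<close>)
  qed (simp add: \<open>xs = x # ys\<close> cyclic_quiddity_def)
qed (simp add: cyclic_quiddity_def)

lemma cyclic_quiddity_rotate: "cyclic_quiddity (rotate k xs) = rotate k (cyclic_quiddity xs)"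
  by (induction k) (simp_all add: cyclic_quiddity_rotate1)

lemma cyclic_quiddity_map:
  assumes "\<And>p v u. quid_coeff (f p) (f v) (f u) = quid_coeff p v u"
  shows "cyclic_quiddity (map f xs) = cyclic_quiddity xs"
proof (cases "xs = []")
  case False
  have inner_map: "inner_coeffs (map f ys) = inner_coeffs ys" for ys
    by (induction ys rule: inner_coeffs.induct) (simp_all add: assms)
  from False have "cyclic_quiddity (map f xs) = inner_coeffs (map f (last xs # xs @ [hd xs]))"
    by (simp add: cyclic_quiddity_def last_map hd_map)
  then show ?thesis
    by (simp only: inner_map cyclic_quiddity_def)
qed (simp add: cyclic_quiddity_def)

lemma cyclic_quiddity_Cons_snoc:
  "cyclic_quiddity (x # xs @ [z]) =
     quid_coeff z x (hd (xs @ [z])) #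
       inner_coeffs (x # xs @ [z]) @ [quid_coeff (last (x # xs)) z x]"
proof -
  have "cyclic_quiddity (x # xs @ [z]) = inner_coeffs (z # x # xs @ [z, x])"
    by (simp add: cyclic_quiddity_def)
  also have "\<dots> = quid_coeff z x (hd (xs @ [z])) # inner_coeffs ((x # xs) @ [z, x])"
    by (cases xs) simp_all
  also have "inner_coeffs ((x # xs) @ [z, x]) =
      inner_coeffs (x # xs @ [z]) @ [quid_coeff (last (x # xs)) z x]"
    using inner_coeffs_snoc[of "x # xs" z x] by simp
  finally show ?thesis .
qed

lemma cyclic_quiddity_Cons_snoc_snoc:
  assumes "xs \<noteq> []"
  shows "cyclic_quiddity (x # xs @ [y, z]) = quid_coeff z x (hd xs) #
     inner_coeffs (x # xs @ [y]) @ [quid_coeff (last xs) y z, quid_coeff y z x]"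
  using cyclic_quiddity_Cons_snoc[of x "xs @ [y]" z] inner_coeffs_snoc[of "x # xs" y z] assms
  by simp

lemma length_cyclic_quiddity [simp]: "length (cyclic_quiddity xs) = length xs"
  by (simp add: cyclic_quiddity_def inner_coeffs_conv_nth)

lemma cyclic_quiddity_snoc_vadd:
  assumes "clockwise_cycle zs" and "cyclic_quiddity zs = a # qs @ [b]"
  shows "cyclic_quiddity (zs @ [vadd (last zs) (hd zs)]) = (a + 1) # qs @ [b + 1, 1]"
proof -
  have "zs \<noteq> []"
    using assms(2) by (auto simp: cyclic_quiddity_def)
  with assms(1) have "3 \<le> length zs"
    by (rule clockwise_cycle_length)
  obtain x ys where "zs = x # ys"
    using \<open>zs \<noteq> []\<close> by (cases zs) auto
  moreover obtain us y where "ys = us @ [y]"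
    using \<open>3 \<le> length zs\<close> calculation by (cases ys rule: rev_cases) auto
  ultimately have zs: "zs = x # us @ [y]"
    by simp
  with \<open>3 \<le> length zs\<close> have "us \<noteq> []"
    by auto
  from assms(1) have "successively clockwise_basis (x # us @ [y, x])"
    by (simp add: clockwise_cycle_iff_successively zs)
  with \<open>us \<noteq> []\<close> have cb: "clockwise_basis x (hd us)" "clockwise_basis (last us) y"
    "clockwise_basis y x"
    by (auto simp: successively_Cons successively_append_iff)
  define w where "w = vadd y x"
  have "cyclic_quiddity zs = quid_coeff y x (hd us) # inner_coeffs zs @ [quid_coeff (last us) y x]"
    using cyclic_quiddity_Cons_snoc[of x us y] \<open>us \<noteq> []\<close> by (simp add: zs)
  with assms(2) have a: "a = quid_coeff y x (hd us)" and qs: "qs = inner_coeffs zs"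
    and b: "b = quid_coeff (last us) y x"
    by auto
  have "cyclic_quiddity (zs @ [w]) =
      quid_coeff w x (hd us) # qs @ [quid_coeff (last us) y w, quid_coeff y w x]"
    using cyclic_quiddity_Cons_snoc_snoc[OF \<open>us \<noteq> []\<close>, of x y w] by (simp add: zs qs)
  moreover have "clockwise_basis w x" "clockwise_basis y w"
    using cb(3) by (simp_all add: w_def clockwise_basis_def det2_vadd_left det2_vadd_right det2_self)
  then have "quid_coeff w x (hd us) = a + 1" "quid_coeff (last us) y w = b + 1"
    "quid_coeff y w x = 1"
    using cb by (simp_all add: a b quid_coeff_det2 w_def det2_vadd_left det2_vadd_right
        clockwise_basis_def)
  ultimately show ?thesis
    by (simp add: w_def zs)
qed

text \<open>Reduced to the previous lemma by rotating the cycle.\<close>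
lemma cyclic_quiddity_insert_vadd:
  assumes "clockwise_cycle (xs @ ys)"
    and "cyclic_quiddity (xs @ ys) = as @ [a, b] @ bs" and "length xs = length as + 1"
  shows "cyclic_quiddity (xs @ vadd (last xs) (hd ys) # ys) = as @ [a + 1, 1, b + 1] @ bs"
proof -
  have "length (xs @ ys) = length (as @ [a, b] @ bs)"
    using assms(2) length_cyclic_quiddity by metis
  with assms(3) have ys_len: "length ys = length ((b + 1) # bs)" and "xs \<noteq> []" "ys \<noteq> []"
    by auto
  have rot: "ys @ xs = rotate (length xs) (xs @ ys)"
    by (simp add: rotate_append)
  with assms(1) have "clockwise_cycle (ys @ xs)"
    by (simp add: clockwise_cycle_rotate)
  moreover have "cyclic_quiddity (ys @ xs) = rotate (length (as @ [a])) ((as @ [a]) @ b # bs)"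
    unfolding rot cyclic_quiddity_rotate assms(2) by (simp add: assms(3))
  then have "cyclic_quiddity (ys @ xs) = b # (bs @ as) @ [a]"
    unfolding rotate_append by simp
  ultimately have snoc: "cyclic_quiddity ((ys @ xs) @ [vadd (last (ys @ xs)) (hd (ys @ xs))]) =
      (b + 1) # (bs @ as) @ [a + 1, 1]"
    by (rule cyclic_quiddity_snoc_vadd)
  have "xs @ vadd (last xs) (hd ys) # ys
      = rotate (length ys) ((ys @ xs) @ [vadd (last (ys @ xs)) (hd (ys @ xs))])"
    using rotate_append[of ys "xs @ [vadd (last xs) (hd ys)]"] \<open>xs \<noteq> []\<close> \<open>ys \<noteq> []\<close>
    by simp
  then have "cyclic_quiddity (xs @ vadd (last xs) (hd ys) # ys)
      = rotate (length ys) ((b + 1) # (bs @ as) @ [a + 1, 1])"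
    by (simp only: cyclic_quiddity_rotate snoc)
  also have "\<dots> = rotate (length ((b + 1) # bs)) (((b + 1) # bs) @ as @ [a + 1, 1])"
    by (simp add: ys_len)
  finally show ?thesis
    unfolding rotate_append by simp
qed

lemma inner_coeffs_inject:
  assumes "successively clockwise_basis xs" "successively clockwise_basis ys"
    and "length xs = length ys" "take 2 xs = take 2 ys" "inner_coeffs xs = inner_coeffs ys"
  shows "xs = ys"
proof -
  have short: "xs = ys" if "length xs \<le> 2" "length xs = length ys" "take 2 xs = take 2 ys"
    for xs ys :: "vec list"
    using that by (metis take_all)
  show ?thesis
    using assms
  proof (induction xs arbitrary: ys rule: inner_coeffs.induct)
    case (1 p v u xs)
    then obtain u' ys' where ys: "ys = p # v # u' # ys'"
      by (cases ys rule: inner_coeffs.cases) auto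
    have "vadd p u = smul (quid_coeff p v u) v"
      using "1.prems"(1) by (simp add: smul_quid_coeff)
    also have "\<dots> = vadd p u'"
      using "1.prems"(2,5) by (simp add: ys smul_quid_coeff)
    finally have "u = u'"
      by (rule vadd_left_cancel)
    moreover have "v # u # xs = v # u' # ys'"
    proof (rule "1.IH")
      show "successively clockwise_basis (v # u # xs)"
        using "1.prems"(1) by simp
      show "successively clockwise_basis (v # u' # ys')"
        using "1.prems"(2) by (simp add: ys)
      show "length (v # u # xs) = length (v # u' # ys')"
        using "1.prems"(3) by (simp add: ys)
      show "take 2 (v # u # xs) = take 2 (v # u' # ys')"
        using \<open>u = u'\<close> by simp
      show "inner_coeffs (v # u # xs) = inner_coeffs (v # u' # ys')"
        using "1.prems"(5) by (simp add: ys)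
    qed
    ultimately show ?case
      by (simp add: ys)
  qed (rule short, simp (no_asm), assumption, assumption)+
qed

lemma successively_last_Cons_snoc_hd:
  assumes "clockwise_cycle xs" "xs \<noteq> []"
  shows "successively clockwise_basis (last xs # xs @ [hd xs])"
proof -
  have chain: "successively clockwise_basis (xs @ [hd xs])"
    using assms clockwise_cycle_iff_successively by blast
  then have "clockwise_basis (last xs) (hd xs)"
    using assms(2) by (simp add: successively_append_iff)
  with chain assms(2) show ?thesis
    by (simp add: successively_Cons)
qed

lemma clockwise_cycle_eqI:
  assumes "clockwise_cycle xs" "clockwise_cycle ys" "xs \<noteq> []" "length xs = length ys"
    and "hd xs = hd ys" "last xs = last ys" "cyclic_quiddity xs = cyclic_quiddity ys"
  shows "xs = ys"
proof -
  have "ys \<noteq> []"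
    using assms(3,4) by auto
  have "last xs # xs @ [hd xs] = last ys # ys @ [hd ys]"
  proof (rule inner_coeffs_inject)
    show "successively clockwise_basis (last xs # xs @ [hd xs])"
      "successively clockwise_basis (last ys # ys @ [hd ys])"
      using assms(1,2,3) \<open>ys \<noteq> []\<close> by (simp_all add: successively_last_Cons_snoc_hd)
    show "length (last xs # xs @ [hd xs]) = length (last ys # ys @ [hd ys])"
      using assms(4) by simp
    show "take 2 (last xs # xs @ [hd xs]) = take 2 (last ys # ys @ [hd ys])"
      using assms(3,5,6) \<open>ys \<noteq> []\<close> by (cases xs; cases ys) auto
    show "inner_coeffs (last xs # xs @ [hd xs]) = inner_coeffs (last ys # ys @ [hd ys])"
      using assms(7) by (simp add: cyclic_quiddity_def)
  qed
  then show ?thesis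
    by simp
qed

section \<open>Fans given by ray lists\<close>

definition cones_of :: "vec list \<Rightarrow> vec set set" where
  "cones_of xs = (\<lambda>(u, v). {u, v}) ` set (zip xs (rotate1 xs))"

definition path_cones :: "vec list \<Rightarrow> vec set set" where
  "path_cones xs = (\<lambda>(u, v). {u, v}) ` set (zip xs (tl xs))"

lemma fan_of_conv_cones_of: "fan_of xs = (set xs, cones_of xs)"
proof -
  have "set (zip xs (rotate1 xs)) = {(xs ! i, rotate1 xs ! i) | i. i < length xs}"
    by (simp add: set_zip)
  also have "\<dots> = {(xs ! i, xs ! ((i + 1) mod length xs)) | i. i < length xs}"
    by (metis (no_types, opaque_lifting) nth_rotate1 Suc_eq_plus1)
  finally have "cones_of xs = {{xs ! i, xs ! ((i + 1) mod length xs)} | i. i < length xs}"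
    unfolding cones_of_def by auto
  then show ?thesis
    by (simp add: fan_of_def)
qed

lemma zip_rotate1:
  "length xs = length ys \<Longrightarrow> zip (rotate1 xs) (rotate1 ys) = rotate1 (zip xs ys)"
  by (cases xs; cases ys) auto

lemma cones_of_rotate1: "cones_of (rotate1 xs) = cones_of xs"
  by (simp add: cones_of_def zip_rotate1)

lemma fan_of_rotate: "fan_of (rotate k xs) = fan_of xs"
proof -
  have "cones_of (rotate k xs) = cones_of xs"
    by (induction k) (simp_all add: cones_of_rotate1)
  then show ?thesis
    by (simp add: fan_of_conv_cones_of)
qed

lemma fan_of_map: "fan_of (map f xs) = (f ` set xs, (\<lambda>c. f ` c) ` cones_of xs)"
proof -
  have "zip (map f xs) (rotate1 (map f xs)) = map (\<lambda>(u, v). (f u, f v)) (zip xs (rotate1 xs))"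
    by (simp add: rotate1_map zip_map_map)
  then have "cones_of (map f xs) = (\<lambda>c. f ` c) ` cones_of xs"
    unfolding cones_of_def by (simp add: image_image split_def)
  then show ?thesis
    by (simp add: fan_of_conv_cones_of)
qed

lemma zip_tl_snoc: "xs \<noteq> [] \<Longrightarrow> zip xs (tl xs @ [a]) = zip xs (tl xs) @ [(last xs, a)]"
  by (induction xs rule: induct_list012) auto

lemma cones_of_conv_path_cones:
  "xs \<noteq> [] \<Longrightarrow> cones_of xs = insert {last xs, hd xs} (path_cones xs)"
  by (simp add: cones_of_def path_cones_def rotate1_hd_tl zip_tl_snoc)

lemma zip_snoc_tl_snoc:
  "xs \<noteq> [] \<Longrightarrow> zip (xs @ [a]) (tl (xs @ [a])) = zip xs (tl xs) @ [(last xs, a)]"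
  by (induction xs rule: induct_list012) auto

lemma path_cones_snoc:
  "xs \<noteq> [] \<Longrightarrow> path_cones (xs @ [a]) = insert {last xs, a} (path_cones xs)"
  using zip_snoc_tl_snoc[of xs a] by (simp add: path_cones_def)

lemma path_cones_Cons:
  "xs \<noteq> [] \<Longrightarrow> path_cones (x # xs) = insert {x, hd xs} (path_cones xs)"
  by (cases xs) (simp_all add: path_cones_def)

lemma path_cones_subset: "c \<in> path_cones xs \<Longrightarrow> c \<subseteq> set xs"
  by (cases xs) (auto simp: path_cones_def dest: set_zip_leftD set_zip_rightD)

text \<open>Otherwise the two rays would be consecutive in both orders, and det2 cannot be -1
  for both.\<close>
lemma last_hd_notin_path_cones:
  assumes "distinct xs" "clockwise_cycle xs" "xs \<noteq> []"
  shows "{last xs, hd xs} \<notin> path_cones xs"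
proof
  assume "{last xs, hd xs} \<in> path_cones xs"
  then obtain a b where "(a, b) \<in> set (zip xs (tl xs))" "{a, b} = {last xs, hd xs}"
    by (auto simp: path_cones_def)
  then obtain i where "i < length xs - 1" "a = xs ! i" "b = xs ! Suc i"
    by (auto simp: set_zip nth_tl)
  with \<open>{a, b} = {last xs, hd xs}\<close>
  have i: "Suc i < length xs" "{xs ! i, xs ! Suc i} = {last xs, hd xs}"
    by auto
  have "xs ! i \<noteq> last xs" "xs ! Suc i \<noteq> hd xs"
    using assms(1,3) i(1) by (simp_all add: last_conv_nth hd_conv_nth nth_eq_iff_index_eq)
  with i(2) have "xs ! i = hd xs" "xs ! Suc i = last xs"
    by (auto simp: doubleton_eq_iff)
  moreover have "clockwise_basis (xs ! i) (xs ! Suc i)"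
    using assms(2) i(1) unfolding clockwise_cycle_def
    by (auto dest!: spec[of _ i])
  moreover have "clockwise_basis (last xs) (hd xs)"
    using assms(2,3) by (simp add: clockwise_cycle_iff_successively successively_append_iff)
  ultimately show False
    by (simp add: clockwise_basis_def det2_swap[of "last xs"])
qed

lemma subdiv_fan_of:
  assumes "distinct (xs @ ys)" "clockwise_cycle (xs @ ys)" "xs \<noteq> []" "ys \<noteq> []"
  shows "subdiv (last xs, hd ys) (fan_of (xs @ ys)) = fan_of (xs @ vadd (last xs) (hd ys) # ys)"
proof -
  define w where "w = vadd (last xs) (hd ys)"
  have rot: "ys @ xs = rotate (length xs) (xs @ ys)"
    by (simp add: rotate_append)
  have "distinct (ys @ xs)" "clockwise_cycle (ys @ xs)"
    using assms(1,2) by (auto simp: rot clockwise_cycle_rotate)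
  then have notin: "{last xs, hd ys} \<notin> path_cones (ys @ xs)"
    using last_hd_notin_path_cones[of "ys @ xs"] assms(3,4) by simp
  have "fan_of (xs @ ys) = fan_of (ys @ xs)"
    by (simp add: rot fan_of_rotate)
  also have "\<dots> = (set (ys @ xs), insert {last xs, hd ys} (path_cones (ys @ xs)))"
    using assms(3,4) by (simp add: fan_of_conv_cones_of cones_of_conv_path_cones)
  finally have "subdiv (last xs, hd ys) (fan_of (xs @ ys)) = (insert w (set (ys @ xs)),
      (insert {last xs, hd ys} (path_cones (ys @ xs)) - {{last xs, hd ys}})
        \<union> {{last xs, w}, {hd ys, w}})"
    by (simp add: subdiv_def w_def Let_def)
  also have "\<dots> = (insert w (set (ys @ xs)),
      insert {w, hd ys} (insert {last xs, w} (path_cones (ys @ xs))))"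
    using notin by (simp add: Diff_insert_absorb insert_commute)
  also have "\<dots> = fan_of ((ys @ xs) @ [w])"
    using assms(3,4) path_cones_snoc[of "ys @ xs" w]
    by (simp add: fan_of_conv_cones_of cones_of_conv_path_cones)
  also have "\<dots> = fan_of (rotate (length ys) ((ys @ xs) @ [w]))"
    by (simp only: fan_of_rotate)
  also have "rotate (length ys) ((ys @ xs) @ [w]) = xs @ w # ys"
    using rotate_append[of ys "xs @ [w]"] by simp
  finally show ?thesis
    unfolding w_def .
qed

section \<open>Ray sequences\<close>

definition fourth_quadrant :: "vec \<Rightarrow> bool" where
  "fourth_quadrant v \<longleftrightarrow> 0 \<le> fst v \<and> snd v \<le> 0 \<and> v \<noteq> (0, 0)"

text \<open>On the fourth quadrant, a strictly increasing function of the clockwise angle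
  from (1,0); it maps (1,0) to 0 and (0,-1) to 1.\<close>
definition clockwise_rank :: "vec \<Rightarrow> real" where
  "clockwise_rank v = - of_int (snd v) / (of_int (fst v) - of_int (snd v))"

lemma clockwise_rank_less_iff:
  assumes "fourth_quadrant u" "fourth_quadrant v"
  shows "clockwise_rank u < clockwise_rank v \<longleftrightarrow> det2 u v < 0"
proof -
  obtain a b c d where uv: "u = (a, b)" "v = (c, d)"
    by (metis prod.exhaust)
  have "a - b > 0" "c - d > 0"
    using assms by (auto simp: uv fourth_quadrant_def)
  then have "clockwise_rank u < clockwise_rank v \<longleftrightarrow>
      - real_of_int b * (real_of_int c - real_of_int d)
        < - real_of_int d * (real_of_int a - real_of_int b)"
    by (simp add: clockwise_rank_def uv divide_simps)
  also have "\<dots> \<longleftrightarrow> - b * (c - d) < - d * (a - b)"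
    by (metis of_int_less_iff of_int_minus of_int_mult of_int_diff)
  also have "\<dots> \<longleftrightarrow> det2 u v < 0"
    by (simp add: uv det2_def algebra_simps)
  finally show ?thesis .
qed

lemma fourth_quadrant_open:
  assumes "fourth_quadrant v" "0 < clockwise_rank v" "clockwise_rank v < 1"
  shows "0 < fst v \<and> snd v < 0"
proof -
  obtain a b where v: "v = (a, b)"
    by (metis prod.exhaust)
  have "a - b > 0"
    using assms(1) by (auto simp: v fourth_quadrant_def)
  with assms(2,3) show ?thesis
    by (auto simp: v clockwise_rank_def divide_simps)
qed

lemma fourth_quadrant_vadd:
  "fourth_quadrant u \<Longrightarrow> fourth_quadrant v \<Longrightarrow> fourth_quadrant (vadd u v)"
  by (auto simp: fourth_quadrant_def vadd_def prod_eq_iff)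

definition fourth_quadrant_chain :: "vec list \<Rightarrow> bool" where
  "fourth_quadrant_chain cs \<longleftrightarrow> cs \<noteq> [] \<and> hd cs = (1, 0) \<and> last cs = (0, -1) \<and>
     (\<forall>c \<in> set cs. fourth_quadrant c) \<and> successively clockwise_basis cs"

lemma fourth_quadrant_chain_sorted:
  assumes "fourth_quadrant_chain cs"
  shows "sorted_wrt (<) (map clockwise_rank cs)"
proof -
  have "successively (\<lambda>u v. clockwise_rank u < clockwise_rank v) cs"
    using assms unfolding fourth_quadrant_chain_def
    by (auto intro: successively_mono simp: clockwise_rank_less_iff clockwise_basis_def)
  then show ?thesis
    by (simp add: sorted_wrt_map successively_conv_sorted_wrt transp_on_def)
qed

lemma fourth_quadrant_chain_distinct: "fourth_quadrant_chain cs \<Longrightarrow> distinct cs"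
  using fourth_quadrant_chain_sorted distinct_map strict_sorted_iff by blast

lemma is_ray_seq_conv_clockwise_cycle:
  "is_ray_seq vs \<longleftrightarrow> (let n = length vs in
     n \<ge> 4 \<and> vs ! 0 = (1, 0) \<and> vs ! (n - 3) = (0, -1) \<and> vs ! (n - 2) = (-1, 0) \<and>
     vs ! (n - 1) = (0, 1) \<and> clockwise_cycle vs \<and>
     (\<forall>i. 0 < i \<and> i < n - 3 \<longrightarrow> fst (vs ! i) > 0 \<and> snd (vs ! i) < 0))"
  by (simp add: is_ray_seq_def clockwise_cycle_def clockwise_basis_def)

lemma fourth_quadrant_chain_interior:
  assumes "fourth_quadrant_chain cs" "0 < i" "i < length cs - 1"
  shows "0 < fst (cs ! i) \<and> snd (cs ! i) < 0"
proof (rule fourth_quadrant_open)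
  have mono: "clockwise_rank (cs ! j) < clockwise_rank (cs ! k)" if "j < k" "k < length cs" for j k
    using fourth_quadrant_chain_sorted[OF assms(1)] that by (auto simp: sorted_wrt_iff_nth_less)
  have "cs \<noteq> []" "hd cs = (1, 0)" "last cs = (0, -1)"
    using assms(1) by (simp_all add: fourth_quadrant_chain_def)
  then have "cs ! 0 = (1, 0)" "cs ! (length cs - 1) = (0, -1)"
    by (metis hd_conv_nth, metis last_conv_nth)
  with mono[of 0 i] mono[of i "length cs - 1"] assms(2,3)
  show "0 < clockwise_rank (cs ! i)" "clockwise_rank (cs ! i) < 1"
    by (simp_all add: clockwise_rank_def)
  show "fourth_quadrant (cs ! i)"
    using assms by (simp add: fourth_quadrant_chain_def)
qed

lemma is_ray_seq_append:
  assumes "fourth_quadrant_chain cs"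
  shows "is_ray_seq (cs @ [(-1, 0), (0, 1)])"
proof -
  have cs: "cs \<noteq> []" "hd cs = (1, 0)" "last cs = (0, -1)" "successively clockwise_basis cs"
    using assms by (simp_all add: fourth_quadrant_chain_def)
  then have "length cs \<noteq> 1" "length cs \<noteq> 0"
    by (auto simp: length_Suc_conv)
  then have "2 \<le> length cs"
    by linarith
  moreover have "clockwise_cycle (cs @ [(-1, 0), (0, 1)])"
    using cs by (simp add: clockwise_cycle_iff_successively successively_append_iff
        clockwise_basis_def det2_def)
  ultimately show ?thesis
    using cs(1-3) fourth_quadrant_chain_interior[OF assms]
    by (auto simp: is_ray_seq_conv_clockwise_cycle nth_append hd_conv_nth last_conv_nth Let_def)
qed

lemma is_ray_seq_imp_chain:
  assumes "is_ray_seq vs"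
  shows "fourth_quadrant_chain (take (length vs - 2) vs) \<and>
    vs = take (length vs - 2) vs @ [(-1, 0), (0, 1)]"
proof -
  define n where "n = length vs"
  define cs where "cs = take (n - 2) vs"
  have n: "n \<ge> 4" "vs ! 0 = (1, 0)" "vs ! (n - 3) = (0, -1)" "vs ! (n - 2) = (-1, 0)"
    "vs ! (n - 1) = (0, 1)" and cyc: "clockwise_cycle vs"
    and open4: "\<And>i. 0 < i \<Longrightarrow> i < n - 3 \<Longrightarrow> fst (vs ! i) > 0 \<and> snd (vs ! i) < 0"
    using assms by (simp_all add: is_ray_seq_conv_clockwise_cycle n_def Let_def)
  have "drop (n - 2) vs = [vs ! (n - 2), vs ! (n - 1)]"
    using n(1) Cons_nth_drop_Suc[of "n - 2" vs] Cons_nth_drop_Suc[of "n - 1" vs]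
    by (simp add: n_def Suc_diff_Suc numeral_2_eq_2)
  then have vs: "vs = cs @ [(-1, 0), (0, 1)]"
    using n(4,5) by (metis append_take_drop_id cs_def)
  have len: "length cs = n - 2"
    using n(1) by (simp add: cs_def n_def)
  have cs_nth: "cs ! k = vs ! k" if "k < n - 2" for k
    using that by (simp add: cs_def)
  have quad: "fourth_quadrant (cs ! k)" if "k < n - 2" for k
  proof -
    have "k = 0 \<or> 0 < k \<and> k < n - 3 \<or> k = n - 3"
      using that by linarith
    then show ?thesis
      using n open4[of k] by (auto simp: cs_nth that fourth_quadrant_def)
  qed
  have "successively clockwise_basis cs"
    unfolding successively_conv_nth
  proof (intro allI impI)
    fix k assume "Suc k < length cs"
    then show "clockwise_basis (cs ! k) (cs ! Suc k)"
      using cyc len by (auto simp: clockwise_cycle_def cs_nth n_def dest!: spec[of _ k])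
  qed
  moreover have "cs \<noteq> []"
    using len n(1) by auto
  moreover have "hd cs = (1, 0)" "last cs = (0, -1)"
    using \<open>cs \<noteq> []\<close> n(1-3) len by (simp_all add: hd_conv_nth last_conv_nth cs_nth)
  moreover have "\<forall>c \<in> set cs. fourth_quadrant c"
    using quad len by (metis in_set_conv_nth)
  ultimately have "fourth_quadrant_chain cs"
    by (simp add: fourth_quadrant_chain_def)
  with vs show ?thesis
    unfolding cs_def n_def by blast
qed

lemma is_ray_seq_iff:
  "is_ray_seq vs \<longleftrightarrow> (\<exists>cs. fourth_quadrant_chain cs \<and> vs = cs @ [(-1, 0), (0, 1)])"
proof
  assume "is_ray_seq vs"
  then have "fourth_quadrant_chain (take (length vs - 2) vs) \<and>
      vs = take (length vs - 2) vs @ [(-1, 0), (0, 1)]"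
    by (rule is_ray_seq_imp_chain)
  then show "\<exists>cs. fourth_quadrant_chain cs \<and> vs = cs @ [(-1, 0), (0, 1)]"
    by (rule exI)
qed (auto simp: is_ray_seq_append)

lemma is_ray_seq_clockwise_cycle: "is_ray_seq vs \<Longrightarrow> clockwise_cycle vs"
  by (simp add: is_ray_seq_conv_clockwise_cycle Let_def)

lemma is_ray_seq_length: "is_ray_seq vs \<Longrightarrow> 4 \<le> length vs"
  by (simp add: is_ray_seq_def Let_def)

lemma is_ray_seq_distinct:
  assumes "is_ray_seq vs"
  shows "distinct vs"
proof -
  obtain cs where "fourth_quadrant_chain cs" and vs: "vs = cs @ [(-1, 0), (0, 1)]"
    using assms is_ray_seq_iff by blast
  then have "distinct cs" "(-1, 0) \<notin> set cs" "(0, 1) \<notin> set cs"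
    by (auto simp: fourth_quadrant_chain_distinct fourth_quadrant_chain_def fourth_quadrant_def)
  then show ?thesis
    by (simp add: vs)
qed

lemma is_ray_seq_set_eq:
  assumes "is_ray_seq vs" "is_ray_seq ws" "set vs = set ws"
  shows "vs = ws"
proof -
  obtain cs ds where cs: "fourth_quadrant_chain cs" "vs = cs @ [(-1, 0), (0, 1)]"
    and ds: "fourth_quadrant_chain ds" "ws = ds @ [(-1, 0), (0, 1)]"
    using assms(1,2) is_ray_seq_iff by blast
  have "set cs = set vs - {(-1, 0), (0, 1)}" "set ds = set ws - {(-1, 0), (0, 1)}"
    using cs ds by (auto simp: fourth_quadrant_chain_def fourth_quadrant_def)
  with assms(3) have "set cs = set ds"
    by simp
  moreover have "sorted_wrt (<) (map clockwise_rank cs)" "sorted_wrt (<) (map clockwise_rank ds)"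
    using cs(1) ds(1) by (simp_all add: fourth_quadrant_chain_sorted)
  ultimately have "map clockwise_rank cs = map clockwise_rank ds"
    by (metis list.set_map strict_sorted_equal)
  moreover have "inj_on clockwise_rank (set cs \<union> set ds)"
    using \<open>set cs = set ds\<close> \<open>sorted_wrt (<) (map clockwise_rank cs)\<close>
    by (simp add: strict_sorted_iff distinct_map)
  ultimately show ?thesis
    using cs(2) ds(2) by (simp add: inj_on_map_eq_map)
qed

lemma rays_list_fan_of: "is_ray_seq vs \<Longrightarrow> rays_list (fan_of vs) = vs"
  unfolding rays_list_def
  by (rule the_equality) (auto simp: fan_of_def intro: is_ray_seq_set_eq)

lemma nrays_fan_of: "is_ray_seq vs \<Longrightarrow> nrays (fan_of vs) = length vs"
  by (simp add: nrays_def rays_list_fan_of)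

lemma ray_fan_of:
  assumes "is_ray_seq vs" "i \<le> length vs + 1"
  shows "ray (fan_of vs) i = (last vs # vs @ [hd vs]) ! i"
proof -
  define n where "n = length vs"
  have n: "4 \<le> n"
    using assms(1) is_ray_seq_length by (simp add: n_def)
  then have "vs \<noteq> []"
    by (auto simp: n_def)
  have "ray (fan_of vs) i = vs ! ((i + n - 1) mod n)"
    using assms(1) by (simp add: ray_def nrays_fan_of rays_list_fan_of n_def)
  also have "\<dots> = (last vs # vs @ [hd vs]) ! i"
  proof -
    consider "i = 0" | "0 < i" "i \<le> n" | "i = n + 1"
      using assms(2) n_def by linarith
    then show ?thesis
    proof cases
      case 1
      then show ?thesis
        using n \<open>vs \<noteq> []\<close> by (simp add: n_def last_conv_nth)
    next
      case 2
      then have "(i + n - 1) mod n = i - 1"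
        by (simp add: mod_if)
      with 2 show ?thesis
        by (auto simp: n_def nth_append)
    next
      case 3
      then show ?thesis
        using n \<open>vs \<noteq> []\<close> by (simp add: n_def nth_append hd_conv_nth)
    qed
  qed
  finally show ?thesis .
qed

lemma quiddity_fan_of:
  assumes "is_ray_seq vs"
  shows "quiddity (fan_of vs) = cyclic_quiddity vs"
proof -
  define ext where "ext = last vs # vs @ [hd vs]"
  define n where "n = length vs"
  have "quiddity (fan_of vs) =
      map (\<lambda>i. quid_coeff (ext ! (i - 1)) (ext ! i) (ext ! (i + 1))) [1..<n + 1]"
    using assms
    by (auto simp: quiddity_def quid_coeff_def nrays_fan_of ray_fan_of ext_def n_def)
  also have "\<dots> = map (\<lambda>i. quid_coeff (ext ! i) (ext ! (i + 1)) (ext ! (i + 2))) [0..<n]"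
    by (simp add: map_Suc_upt[symmetric] del: upt_Suc)
  also have "\<dots> = cyclic_quiddity vs"
    by (simp add: cyclic_quiddity_def inner_coeffs_conv_nth ext_def n_def)
  finally show ?thesis .
qed

lemma facet_fan_of:
  assumes "is_ray_seq vs" "1 \<le> i" "i < length vs"
  shows "facet (fan_of vs) i = (vs ! (i - 1), vs ! i)"
  using assms by (auto simp: facet_def ray_fan_of nth_append)

section \<open>The rotation\<close>

lemma is_ray_seq_obtain:
  assumes "is_ray_seq vs"
  obtains l us where "vs = (1, 0) # (l, -1) # us @ [(-1, 0), (0, 1)]"
    and "fourth_quadrant_chain ((1, 0) # (l, -1) # us)"
proof -
  obtain cs where ch: "fourth_quadrant_chain cs" and vs: "vs = cs @ [(-1, 0), (0, 1)]"
    using assms is_ray_seq_iff by blast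
  then obtain ds where cs: "cs = (1, 0) # ds"
    by (cases cs) (auto simp: fourth_quadrant_chain_def)
  with ch have "ds \<noteq> []"
    by (auto simp: fourth_quadrant_chain_def)
  then obtain a b us where ds: "ds = (a, b) # us"
    by (metis list.exhaust prod.exhaust)
  with ch cs have "b = -1"
    by (simp add: fourth_quadrant_chain_def clockwise_basis_def det2_def)
  with that ch show ?thesis
    by (simp add: vs cs ds)
qed

definition rho_map :: "int \<Rightarrow> vec \<Rightarrow> vec" where
  "rho_map l = (\<lambda>(x, y). (- y, x + l * y))"

lemma det2_rho_map: "det2 (rho_map l u) (rho_map l v) = det2 u v"
  by (cases u; cases v) (simp add: rho_map_def det2_def algebra_simps)

lemma quid_coeff_linear:
  assumes "inj f" and "\<And>a v. f (smul a v) = smul a (f v)"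
    and "\<And>u v. f (vadd u v) = vadd (f u) (f v)"
  shows "quid_coeff (f p) (f v) (f u) = quid_coeff p v u"
proof -
  have "smul a (f v) = vadd (f p) (f u) \<longleftrightarrow> smul a v = vadd p u" for a
    by (metis assms injD)
  then show ?thesis
    by (simp add: quid_coeff_def)
qed

lemma quid_coeff_rho_map:
  "quid_coeff (rho_map l p) (rho_map l v) (rho_map l u) = quid_coeff p v u"
proof (rule quid_coeff_linear)
  show "inj (rho_map l)"
    by (auto simp: inj_def rho_map_def)
qed (auto simp: rho_map_def smul_def vadd_def algebra_simps)

lemma fourth_quadrant_rho_map:
  assumes "fourth_quadrant c" "det2 (l, -1) c \<le> 0"
  shows "fourth_quadrant (rho_map l c)"
  using assms by (cases c) (auto simp: fourth_quadrant_def rho_map_def det2_def)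

lemma fourth_quadrant_rho_map_chain:
  assumes "fourth_quadrant_chain ((1, 0) # (l, -1) # us)" "c \<in> set ((l, -1) # us)"
  shows "fourth_quadrant (rho_map l c)"
proof (rule fourth_quadrant_rho_map)
  show "fourth_quadrant c"
    using assms by (auto simp: fourth_quadrant_chain_def)
  show "det2 (l, -1) c \<le> 0"
  proof (cases "c = (l, -1)")
    case False
    with assms(2) have "clockwise_rank (l, -1) < clockwise_rank c"
      using fourth_quadrant_chain_sorted[OF assms(1)] by auto
    with assms show ?thesis
      by (auto simp: clockwise_rank_less_iff fourth_quadrant_chain_def)
  qed (simp add: det2_def)
qed

text \<open>The ray list of rho(Sigma): (0,1) is replaced by (-l,1), the first ray (1,0) moves
  to the end, and the linear map of rho is applied.\<close>
definition rotate_rays :: "vec list \<Rightarrow> vec list" where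
  "rotate_rays vs = (let l = fst (vs ! 1) in map (rho_map l) (rotate1 (butlast vs @ [(- l, 1)])))"

lemma rotate_rays_eq:
  "rotate_rays ((1, 0) # (l, -1) # us @ [(-1, 0), (0, 1)]) =
     map (rho_map l) ((l, -1) # us @ [(-1, 0)]) @ [(-1, 0), (0, 1)]"
  by (simp add: rotate_rays_def rho_map_def butlast_append)

lemma length_rotate_rays: "vs \<noteq> [] \<Longrightarrow> length (rotate_rays vs) = length vs"
  by (simp add: rotate_rays_def Let_def)

lemma is_ray_seq_rotate_rays:
  assumes "is_ray_seq vs"
  shows "is_ray_seq (rotate_rays vs)"
proof -
  obtain l us where vs: "vs = (1, 0) # (l, -1) # us @ [(-1, 0), (0, 1)]"
    and ch: "fourth_quadrant_chain ((1, 0) # (l, -1) # us)"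
    using assms by (rule is_ray_seq_obtain)
  define ds where "ds = (l, -1) # us @ [(-1, 0)]"
  have "last ((l, -1) # us) = (0, -1)"
    using ch by (simp add: fourth_quadrant_chain_def)
  then have "successively clockwise_basis ds"
    using ch by (simp add: ds_def fourth_quadrant_chain_def successively_append_iff
        clockwise_basis_def det2_def flip: append_Cons)
  then have "successively clockwise_basis (map (rho_map l) ds)"
    by (simp add: successively_map clockwise_basis_def det2_rho_map)
  moreover have "\<forall>c \<in> set (map (rho_map l) ds). fourth_quadrant c"
  proof -
    have "fourth_quadrant (rho_map l c)" if "c \<in> set ds" for c
      using that fourth_quadrant_rho_map_chain[OF ch, of c]
      by (cases "c = (-1, 0)") (auto simp: ds_def rho_map_def fourth_quadrant_def)
    then show ?thesis
      by simp
  qed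
  moreover have "hd (map (rho_map l) ds) = (1, 0)" "last (map (rho_map l) ds) = (0, -1)"
    by (simp_all add: ds_def rho_map_def last_map)
  ultimately have "fourth_quadrant_chain (map (rho_map l) ds)"
    by (simp add: fourth_quadrant_chain_def ds_def)
  then show ?thesis
    by (auto simp: is_ray_seq_iff vs rotate_rays_eq ds_def)
qed

lemma cyclic_quiddity_rotate_rays:
  assumes "is_ray_seq vs"
  obtains c where "cyclic_quiddity vs = c @ [0, 0]"
    and "cyclic_quiddity (rotate_rays vs) = rotate1 c @ [0, 0]"
proof -
  obtain l us where vs: "vs = (1, 0) # (l, -1) # us @ [(-1, 0), (0, 1)]"
    and ch: "fourth_quadrant_chain ((1, 0) # (l, -1) # us)"
    using assms by (rule is_ray_seq_obtain)
  define ws where "ws = (l, -1) # us"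
  define q where "q = inner_coeffs ((1, 0) # ws @ [(-1, 0)])"
  have vs': "vs = (1, 0) # ws @ [(-1, 0), (0, 1)]" and ws: "ws \<noteq> []" "hd ws = (l, -1)"
    by (simp_all add: vs ws_def)
  have last_ws: "last ws = (0, -1)"
    using ch by (simp add: ws_def fourth_quadrant_chain_def)
  have coeff: "quid_coeff (0, 1) (1, 0) (l, -1) = l" "quid_coeff (0, -1) (-1, 0) (0, 1) = 0"
    "quid_coeff (-1, 0) (0, 1) (1, 0) = 0" "quid_coeff (- l, 1) (1, 0) (l, -1) = 0"
    "quid_coeff (0, -1) (-1, 0) (- l, 1) = l" "quid_coeff (-1, 0) (- l, 1) (1, 0) = 0"
    by (rule quid_coeff_eqI; simp add: smul_def vadd_def)+
  have "cyclic_quiddity vs = (l # q) @ [0, 0]"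
    using cyclic_quiddity_Cons_snoc_snoc[OF ws(1), of "(1, 0)" "(-1, 0)" "(0, 1)"]
    by (simp add: vs' ws q_def last_ws coeff)
  moreover have "rotate_rays vs = map (rho_map l) (rotate1 ((1, 0) # ws @ [(-1, 0), (- l, 1)]))"
    by (simp add: vs ws_def rotate_rays_def butlast_append)
  then have "cyclic_quiddity (rotate_rays vs) = rotate1 (0 # q @ [l, 0])"
    using cyclic_quiddity_Cons_snoc_snoc[OF ws(1), of "(1, 0)" "(-1, 0)" "(- l, 1)"]
    by (simp only: cyclic_quiddity_map quid_coeff_rho_map cyclic_quiddity_rotate1 ws q_def
        last_ws coeff)
  ultimately show ?thesis
    using that by simp
qed

lemma rho_parameter_fan_of:
  assumes "is_ray_seq vs"
  shows "(THE l. {(1, 0), (l, -1)} \<in> snd (fan_of vs)) = fst (vs ! 1)"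
proof -
  obtain l us where vs: "vs = (1, 0) # (l, -1) # us @ [(-1, 0), (0, 1)]"
    using assms by (rule is_ray_seq_obtain)
  define tail where "tail = (l, -1) # us @ [(-1, 0), (0, 1)]"
  have "(1, 0) \<notin> set tail"
    using is_ray_seq_distinct[OF assms] by (simp add: vs tail_def)
  then have no10: "(1, 0) \<notin> c" if "c \<in> path_cones tail" for c
    using that path_cones_subset by blast
  have cones: "snd (fan_of vs) = insert {(0, 1), (1, 0)} (insert {(1, 0), (l, -1)} (path_cones tail))"
    by (simp add: fan_of_conv_cones_of cones_of_conv_path_cones path_cones_Cons vs tail_def)
  have "(THE l'. {(1, 0), (l', -1)} \<in> snd (fan_of vs)) = l"
  proof (rule the_equality)
    show "{(1, 0), (l, -1)} \<in> snd (fan_of vs)"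
      by (simp add: cones)
    fix l' assume "{(1, 0), (l', -1)} \<in> snd (fan_of vs)"
    with no10 have "{(1, 0), (l', -1)} = {(1, 0), (l, -1)}"
      by (auto simp: cones doubleton_eq_iff)
    then show "l' = l"
      by (auto simp: doubleton_eq_iff)
  qed
  then show ?thesis
    by (simp add: vs)
qed

lemma rho_fan_of:
  assumes "is_ray_seq vs"
  shows "rho (fan_of vs) = fan_of (rotate_rays vs)"
proof -
  obtain l us where vs: "vs = (1, 0) # (l, -1) # us @ [(-1, 0), (0, 1)]"
    using assms by (rule is_ray_seq_obtain)
  define P where "P = (1, 0) # (l, -1) # us @ [(-1, 0)]"
  have vsP: "vs = P @ [(0, 1)]" and P: "P \<noteq> []" "hd P = (1, 0)" "last P = (-1, 0)"
    by (simp_all add: vs P_def)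
  have "(0, 1) \<notin> set P"
    using is_ray_seq_distinct[OF assms] by (simp add: vsP)
  then have no01: "(0, 1) \<notin> c" if "c \<in> path_cones P" for c
    using that path_cones_subset by blast
  have "cones_of vs - {{(1, 0), (0, 1)}, {(-1, 0), (0, 1)}} = path_cones P"
    using P no01 by (auto simp: vsP cones_of_conv_path_cones path_cones_snoc insert_commute)
  then have "(cones_of vs - {{(1, 0), (0, 1)}, {(-1, 0), (0, 1)}})
      \<union> {vneg ` {(1, 0), (l, -1)}, {(- l, 1), (1, 0)}} = cones_of (P @ [(- l, 1)])"
    using P by (auto simp: vneg_def cones_of_conv_path_cones path_cones_snoc)
  moreover have "(set vs - {(0, 1)}) \<union> {(- l, 1)} = set (P @ [(- l, 1)])"
    using \<open>(0, 1) \<notin> set P\<close> by (auto simp: vsP)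
  moreover have "(THE l. {(1, 0), (l, -1)} \<in> snd (fan_of vs)) = l"
    using rho_parameter_fan_of[OF assms] by (simp add: vs)
  ultimately have "rho (fan_of vs) = (rho_map l ` set (P @ [(- l, 1)]),
      (\<lambda>c. rho_map l ` c) ` cones_of (P @ [(- l, 1)]))"
    unfolding rho_def Let_def by (simp add: fan_of_conv_cones_of rho_map_def)
  also have "\<dots> = fan_of (map (rho_map l) (rotate1 (P @ [(- l, 1)])))"
    by (simp only: fan_of_map cones_of_rotate1 set_rotate1)
  also have "map (rho_map l) (rotate1 (P @ [(- l, 1)])) = rotate_rays vs"
    by (simp add: rotate_rays_def vs P_def butlast_append)
  finally show ?thesis .
qed

section \<open>Subdivision\<close>

text \<open>The list is 0-indexed, so this is the subdivision of the facet cone{v_i, v_(i+1)}.\<close>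
definition subdivide_at :: "vec list \<Rightarrow> nat \<Rightarrow> vec list" where
  "subdivide_at vs i = take i vs @ vadd (vs ! (i - 1)) (vs ! i) # drop i vs"

lemma last_take_conv_nth:
  assumes "0 < i" "i \<le> length xs"
  shows "last (take i xs) = xs ! (i - 1)"
proof -
  have "take i xs \<noteq> []"
    using assms by auto
  then show ?thesis
    using assms by (simp add: last_conv_nth min_def)
qed

lemma subdivide_at_conv:
  assumes "1 \<le> i" "i < length vs"
  shows "subdivide_at vs i = take i vs @ vadd (last (take i vs)) (hd (drop i vs)) # drop i vs"
  using assms by (simp add: subdivide_at_def last_take_conv_nth hd_drop_conv_nth)

lemma subdiv_facet_fan_of:
  assumes "is_ray_seq vs" "1 \<le> i" "i < length vs"
  shows "subdiv (facet (fan_of vs) i) (fan_of vs) = fan_of (subdivide_at vs i)"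
proof -
  have "facet (fan_of vs) i = (last (take i vs), hd (drop i vs))"
    using assms by (simp add: facet_fan_of last_take_conv_nth hd_drop_conv_nth)
  moreover have "distinct (take i vs @ drop i vs)" "clockwise_cycle (take i vs @ drop i vs)"
    using assms(1) by (simp_all add: is_ray_seq_distinct is_ray_seq_clockwise_cycle)
  moreover have "vs \<noteq> []"
    using assms(3) by auto
  ultimately show ?thesis
    using assms subdiv_fan_of[of "take i vs" "drop i vs"] by (simp add: subdivide_at_conv)
qed

lemma fourth_quadrant_chain_insert_vadd:
  assumes "fourth_quadrant_chain (xs @ ys)" "xs \<noteq> []" "ys \<noteq> []"
  shows "fourth_quadrant_chain (xs @ vadd (last xs) (hd ys) # ys)"
proof -
  define w where "w = vadd (last xs) (hd ys)"
  have chain: "successively clockwise_basis xs" "successively clockwise_basis ys"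
    "clockwise_basis (last xs) (hd ys)"
    using assms by (simp_all add: fourth_quadrant_chain_def successively_append_iff)
  then have "clockwise_basis (last xs) w" "clockwise_basis w (hd ys)"
    by (simp_all add: w_def clockwise_basis_def det2_vadd_left det2_vadd_right det2_self)
  with chain assms(3) have "successively clockwise_basis (xs @ w # ys)"
    by (simp add: successively_append_iff successively_Cons)
  moreover have "fourth_quadrant w"
    using assms unfolding w_def fourth_quadrant_chain_def
    by (intro fourth_quadrant_vadd) simp_all
  ultimately show ?thesis
    using assms by (auto simp: fourth_quadrant_chain_def w_def)
qed

lemma is_ray_seq_subdivide_at:
  assumes "is_ray_seq vs" "1 \<le> i" "i \<le> length vs - 3"
  shows "is_ray_seq (subdivide_at vs i)"
proof -
  obtain cs where ch: "fourth_quadrant_chain cs" and vs: "vs = cs @ [(-1, 0), (0, 1)]"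
    using assms is_ray_seq_iff by blast
  have i: "i < length cs"
    using assms(3) is_ray_seq_length[OF assms(1)] by (simp add: vs)
  have "subdivide_at vs i = take i vs @ vadd (last (take i vs)) (hd (drop i vs)) # drop i vs"
    using assms(2) i by (simp add: subdivide_at_conv vs)
  also have "\<dots> = (take i cs @ vadd (last (take i cs)) (hd (drop i cs)) # drop i cs)
      @ [(-1, 0), (0, 1)]"
    using i by (simp add: vs)
  finally show ?thesis
    using fourth_quadrant_chain_insert_vadd[of "take i cs" "drop i cs"] ch assms(2) i
    by (auto simp: is_ray_seq_iff fourth_quadrant_chain_def)
qed

lemma cyclic_quiddity_subdivide_at:
  assumes "clockwise_cycle vs" "cyclic_quiddity vs = as @ [a, b] @ bs" "length as + 1 = i"
  shows "cyclic_quiddity (subdivide_at vs i) = as @ [a + 1, 1, b + 1] @ bs"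
proof -
  have "i < length vs"
    using assms(2,3) length_cyclic_quiddity[of vs] by simp
  then show ?thesis
    using cyclic_quiddity_insert_vadd[of "take i vs" "drop i vs" as a b bs] assms
    by (simp add: subdivide_at_conv)
qed

lemma is_ray_seq_eqI:
  assumes "is_ray_seq vs" "is_ray_seq ws" "length vs = length ws"
    and "cyclic_quiddity vs = cyclic_quiddity ws"
  shows "vs = ws"
proof (rule clockwise_cycle_eqI)
  obtain l us where "vs = (1, 0) # (l, -1) # us @ [(-1, 0), (0, 1)]"
    using assms(1) by (rule is_ray_seq_obtain)
  moreover obtain l' us' where "ws = (1, 0) # (l', -1) # us' @ [(-1, 0), (0, 1)]"
    using assms(2) by (rule is_ray_seq_obtain)
  ultimately show "vs \<noteq> []" "hd vs = hd ws" "last vs = last ws"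
    by simp_all
qed (use assms in \<open>simp_all add: is_ray_seq_clockwise_cycle\<close>)

lemma rho_iterate:
  assumes "is_ray_seq vs" "cyclic_quiddity vs = c @ [0, 0]"
  obtains ws where "(rho ^^ k) (fan_of vs) = fan_of ws" "is_ray_seq ws" "length ws = length vs"
    "cyclic_quiddity ws = rotate k c @ [0, 0]"
proof -
  have "\<exists>ws. (rho ^^ k) (fan_of vs) = fan_of ws \<and> is_ray_seq ws \<and> length ws = length vs \<and>
      cyclic_quiddity ws = rotate k c @ [0, 0]"
  proof (induction k)
    case 0
    then show ?case
      using assms by auto
  next
    case (Suc k)
    then obtain ws where ws: "(rho ^^ k) (fan_of vs) = fan_of ws" "is_ray_seq ws"
      "length ws = length vs" "cyclic_quiddity ws = rotate k c @ [0, 0]"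
      by blast
    obtain c' where "cyclic_quiddity ws = c' @ [0, 0]"
      "cyclic_quiddity (rotate_rays ws) = rotate1 c' @ [0, 0]"
      using ws(2) by (rule cyclic_quiddity_rotate_rays)
    with ws(4) have "cyclic_quiddity (rotate_rays ws) = rotate (Suc k) c @ [0, 0]"
      by simp
    moreover have "ws \<noteq> []"
      using ws(2) is_ray_seq_length by fastforce
    ultimately show ?case
      using ws by (auto simp: rho_fan_of is_ray_seq_rotate_rays length_rotate_rays)
  qed
  with that show ?thesis
    by blast
qed

lemma cyclic_quiddity_ray_seq:
  assumes "is_ray_seq vs"
  obtains c where "cyclic_quiddity vs = c @ [0, 0]"
  using cyclic_quiddity_rotate_rays[OF assms] by metis

lemma rho_period:
  assumes "is_ray_seq vs"
  shows "(rho ^^ (length vs - 2)) (fan_of vs) = fan_of vs"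
proof -
  obtain c where c: "cyclic_quiddity vs = c @ [0, 0]"
    using assms by (rule cyclic_quiddity_ray_seq)
  then have "length c = length vs - 2"
    using length_cyclic_quiddity[of vs] by simp
  obtain ws where ws: "(rho ^^ (length vs - 2)) (fan_of vs) = fan_of ws" "is_ray_seq ws"
    "length ws = length vs" "cyclic_quiddity ws = rotate (length vs - 2) c @ [0, 0]"
    using assms c by (rule rho_iterate)
  have "ws = vs"
    using ws assms c \<open>length c = length vs - 2\<close> by (intro is_ray_seq_eqI) simp_all
  with ws(1) show ?thesis
    by simp
qed

lemma cFanE:
  assumes "S \<in> cFan"
  obtains vs where "S = fan_of vs" "is_ray_seq vs"
  using assms unfolding cFan_def by blast

lemma rho_in_cFan:
  assumes "S \<in> cFan"
  shows "rho S \<in> cFan \<and> nrays (rho S) = nrays S"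
proof -
  obtain vs where vs: "S = fan_of vs" "is_ray_seq vs"
    using assms by (rule cFanE)
  then have "vs \<noteq> []"
    using is_ray_seq_length by fastforce
  with vs show ?thesis
    by (auto simp: cFan_def rho_fan_of is_ray_seq_rotate_rays nrays_fan_of length_rotate_rays)
qed

lemma bij_betw_rho: "bij_betw rho cFan cFan"
proof (rule bij_betw_byWitness)
  let ?inv = "\<lambda>S. (rho ^^ (nrays S - 3)) S"
  have period: "(rho ^^ Suc (nrays S - 3)) S = S" if S: "S \<in> cFan" for S
  proof -
    obtain vs where "S = fan_of vs" "is_ray_seq vs"
      using S by (rule cFanE)
    moreover have "Suc (length vs - 3) = length vs - 2"
      using is_ray_seq_length[OF \<open>is_ray_seq vs\<close>] by simp
    ultimately show ?thesis
      by (simp add: nrays_fan_of rho_period)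
  qed
  have iter: "(rho ^^ k) S \<in> cFan" if "S \<in> cFan" for S k
    using that by (induction k) (simp_all add: rho_in_cFan)
  show "\<forall>S \<in> cFan. ?inv (rho S) = S"
    using period rho_in_cFan by (simp add: funpow_swap1)
  show "\<forall>S \<in> cFan. rho (?inv S) = S"
    using period by simp
  show "rho ` cFan \<subseteq> cFan"
    using rho_in_cFan by blast
  show "?inv ` cFan \<subseteq> cFan"
    using iter by blast
qed

lemma rho_iterate_subdiv_last_facet:
  assumes "is_ray_seq ts" "cyclic_quiddity ts = (bs @ as) @ [x, y] @ [0, 0]"
  obtains us where
    "(rho ^^ length bs) (subdiv (facet (fan_of ts) (length ts - 3)) (fan_of ts)) = fan_of us"
    "is_ray_seq us" "length us = length ts + 1"
    "cyclic_quiddity us = as @ [x + 1, 1, y + 1] @ bs @ [0, 0]"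
proof -
  define n where "n = length ts"
  have n: "4 \<le> n" "length (bs @ as) + 1 = n - 3"
    using assms is_ray_seq_length length_cyclic_quiddity[of ts] by (auto simp: n_def)
  have sub: "subdiv (facet (fan_of ts) (n - 3)) (fan_of ts) = fan_of (subdivide_at ts (n - 3))"
    using assms(1) n by (intro subdiv_facet_fan_of) (simp_all add: n_def)
  have "is_ray_seq (subdivide_at ts (n - 3))"
    using assms(1) n by (intro is_ray_seq_subdivide_at) (simp_all add: n_def)
  moreover have "cyclic_quiddity (subdivide_at ts (n - 3)) = (bs @ as @ [x + 1, 1, y + 1]) @ [0, 0]"
    using cyclic_quiddity_subdivide_at[OF _ assms(2) n(2)] assms(1)
    by (simp add: is_ray_seq_clockwise_cycle)
  ultimately obtain us where
    "(rho ^^ length bs) (fan_of (subdivide_at ts (n - 3))) = fan_of us"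
    "is_ray_seq us" "length us = length (subdivide_at ts (n - 3))"
    "cyclic_quiddity us = rotate (length bs) (bs @ as @ [x + 1, 1, y + 1]) @ [0, 0]"
    by (rule rho_iterate)
  with that sub show ?thesis
    using n by (simp add: rotate_append subdivide_at_def n_def)
qed

lemma append_take_nth_nth_drop:
  "Suc i < length xs \<Longrightarrow> xs = take i xs @ [xs ! i, xs ! Suc i] @ drop (Suc (Suc i)) xs"
  by (metis Cons_nth_drop_Suc Suc_lessD append_Cons append_Nil append_take_drop_id)

lemma subdiv_facet_conv_rho:
  assumes "is_ray_seq vs" "1 \<le> i" "i \<le> length vs - 3"
  shows "subdiv (facet (fan_of vs) i) (fan_of vs) =
    (rho ^^ (length vs - 3 - i))
      (subdiv (facet ((rho ^^ (i + 1)) (fan_of vs)) (length vs - 3)) ((rho ^^ (i + 1)) (fan_of vs)))"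
proof -
  define n where "n = length vs"
  have n: "4 \<le> n" "i \<le> n - 3"
    using assms is_ray_seq_length by (auto simp: n_def)
  obtain c where c: "cyclic_quiddity vs = c @ [0, 0]"
    using assms(1) by (rule cyclic_quiddity_ray_seq)
  then have "length c = n - 2"
    using length_cyclic_quiddity[of vs] by (simp add: n_def)
  have "Suc (i - 1) < length c"
    using n assms(2) \<open>length c = n - 2\<close> by simp
  define as x y bs where "as = take (i - 1) c" and "x = c ! (i - 1)" and "y = c ! Suc (i - 1)"
    and "bs = drop (Suc (Suc (i - 1))) c"
  have c_split: "c = as @ [x, y] @ bs"
    unfolding as_def x_def y_def bs_def using \<open>Suc (i - 1) < length c\<close>
    by (rule append_take_nth_nth_drop)
  have len: "length as = i - 1"
    using \<open>Suc (i - 1) < length c\<close> by (simp add: as_def)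
  with c_split \<open>length c = n - 2\<close> have len_bs: "length bs = n - 3 - i"
    using assms(2) by simp
  have lhs: "subdiv (facet (fan_of vs) i) (fan_of vs) = fan_of (subdivide_at vs i)"
    using assms n by (intro subdiv_facet_fan_of) (simp_all add: n_def)
  have lhs_quid: "cyclic_quiddity (subdivide_at vs i) = as @ [x + 1, 1, y + 1] @ bs @ [0, 0]"
    using c c_split len assms(1,2)
    by (intro cyclic_quiddity_subdivide_at) (simp_all add: is_ray_seq_clockwise_cycle)
  obtain ts where ts: "(rho ^^ (i + 1)) (fan_of vs) = fan_of ts" "is_ray_seq ts"
    "length ts = n" "cyclic_quiddity ts = rotate (i + 1) c @ [0, 0]"
    using assms(1) c unfolding n_def by (rule rho_iterate)
  have "rotate (i + 1) c = (bs @ as) @ [x, y]"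
    using rotate_append[of "as @ [x, y]" bs] len assms(2) c_split by simp
  with ts(4) have "cyclic_quiddity ts = (bs @ as) @ [x, y] @ [0, 0]"
    by simp
  with ts(2) obtain us where us:
    "(rho ^^ length bs) (subdiv (facet (fan_of ts) (length ts - 3)) (fan_of ts)) = fan_of us"
    "is_ray_seq us" "length us = length ts + 1"
    "cyclic_quiddity us = as @ [x + 1, 1, y + 1] @ bs @ [0, 0]"
    by (rule rho_iterate_subdiv_last_facet)
  have "us = subdivide_at vs i"
    using us(2-4) lhs_quid ts(3) assms n
    by (intro is_ray_seq_eqI is_ray_seq_subdivide_at) (simp_all add: subdivide_at_def n_def)
  then show ?thesis
    using lhs ts(1,3) us(1) len_bs by (simp add: n_def)
qed

theorem proposition4p5:
  assumes "S \<in> cFan"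
  shows "rho S \<in> cFan
    \<and> quiddity (rho S) = tl (take (nrays S - 2) (quiddity S)) @ [hd (quiddity S), 0, 0]
    \<and> (rho ^^ (nrays S - 2)) S = S
    \<and> bij_betw rho cFan cFan
    \<and> (\<forall>i. 1 \<le> i \<and> i \<le> nrays S - 3 \<longrightarrow>
         subdiv (facet S i) S =
         (rho ^^ (nrays S - 3 - i))
           (subdiv (facet ((rho ^^ (i + 1)) S) (nrays S - 3)) ((rho ^^ (i + 1)) S)))"
proof -
  obtain vs where S: "S = fan_of vs" and vs: "is_ray_seq vs"
    using assms by (rule cFanE)
  obtain c where c: "cyclic_quiddity vs = c @ [0, 0]"
    "cyclic_quiddity (rotate_rays vs) = rotate1 c @ [0, 0]"
    using vs by (rule cyclic_quiddity_rotate_rays)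
  moreover have "length c = length vs - 2" "c \<noteq> []"
    using c(1) length_cyclic_quiddity[of vs] is_ray_seq_length[OF vs] by auto
  ultimately have "quiddity (rho S) = tl (take (nrays S - 2) (quiddity S)) @ [hd (quiddity S), 0, 0]"
    using vs by (simp add: S nrays_fan_of rho_fan_of quiddity_fan_of is_ray_seq_rotate_rays
        rotate1_hd_tl)
  then show ?thesis
    using rho_in_cFan[OF assms] rho_period[OF vs] bij_betw_rho subdiv_facet_conv_rho[OF vs]
    by (simp add: S nrays_fan_of[OF vs])
qed

end
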